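(* Let $G$ be a finite group with $g_2(G)\geq N$, and suppose there is an exact sequence $1\to\mathbb{Z}_n\to G\to\mathbb{Z}_m\to1$. Then $\min\{m,n\}\geq N$.
   Context: For a finite group $G$ and positive integer $N$, $r_N(G)$ is the minimum number of generators among subgroups of $G$ of index at most $N$, and $g_k(G)=\max\{N : |G|\geq N \text{ and } r_N(G)\geq k\}$. *)

theory Defs
  imports "HOL-Algebra.Algebra"
begin

definition min_gens :: "('a, 'b) monoid_scheme \<Rightarrow> 'a set \<Rightarrow> nat" where
  "min_gens G H = (LEAST k. \<exists>S. S \<subseteq> H \<and> finite S \<and> card S = k \<and> generate G S = H)"

definition r_num :: "nat \<Rightarrow> ('a, 'b) monoid_scheme \<Rightarrow> nat" where
  "r_num N G = Min {min_gens G H | H. subgroup H G \<and> card (carrier G) \<le> N * card H}"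

definition g_num :: "nat \<Rightarrow> ('a, 'b) monoid_scheme \<Rightarrow> nat" where
  "g_num k G = (let A = {N. 1 \<le> N \<and> N \<le> card (carrier G) \<and> k \<le> r_num N G}
                in if A = {} then 0 else Max A)"

end

theory Submission
  imports Defs
begin

text \<open>If g_2(G) >= N then r_M(G) >= 2 for some M >= N, so no subgroup of index at most N
  is cyclic. In the extension 1 -> Z_n -> G -> Z_m -> 1 the kernel is cyclic of index m,
  whence m > N; and a preimage of a generator of Z_m generates a cyclic subgroup of order at
  least m, hence of index at most n, whence n > N.\<close>

lemma min_gens_generate_singleton: "min_gens G (generate G {x}) \<le> 1"
proof -
  have "\<exists>S. S \<subseteq> generate G {x} \<and> finite S \<and> card S = 1 \<and> generate G S = generate G {x}"
    by (rule exI[of _ "{x}"]) (auto intro: generate.incl)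
  then show ?thesis unfolding min_gens_def by (rule Least_le)
qed

lemma r_num_le_min_gens:
  assumes "finite (carrier G)" and "subgroup H G" and "card (carrier G) \<le> N * card H"
  shows "r_num N G \<le> min_gens G H"
proof -
  let ?B = "{min_gens G H | H. subgroup H G \<and> card (carrier G) \<le> N * card H}"
  have "?B \<subseteq> min_gens G ` Pow (carrier G)"
    using subgroup.subset by blast
  then have "finite ?B"
    using assms(1) by (simp add: finite_subset)
  moreover have "min_gens G H \<in> ?B"
    using assms(2,3) by blast
  ultimately show ?thesis
    unfolding r_num_def by (rule Min_le)
qed

lemma g_num_geD:
  assumes "g_num k G \<ge> N" and "N \<ge> 1"
  obtains M where "M \<ge> N" and "k \<le> r_num M G"
proof -
  define A where "A = {N. 1 \<le> N \<and> N \<le> card (carrier G) \<and> k \<le> r_num N G}"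
  have g: "g_num k G = (if A = {} then 0 else Max A)"
    unfolding g_num_def A_def Let_def by simp
  with assms have "A \<noteq> {}" by (cases "A = {}") auto
  moreover have "finite A" unfolding A_def by auto
  ultimately have "Max A \<in> A" by (rule Max_in[rotated])
  moreover have "Max A \<ge> N" using assms(1) g \<open>A \<noteq> {}\<close> by simp
  ultimately show ?thesis using that A_def by blast
qed

lemma index_cyclic_subgroup_gt:
  assumes "group G" and "finite (carrier G)" and "g_num 2 G \<ge> N" and "x \<in> carrier G"
  shows "N * card (generate G {x}) < card (carrier G)"
proof (cases "N = 0")
  case True
  have "\<one>\<^bsub>G\<^esub> \<in> carrier G"
    using assms(1) by (simp add: group.is_monoid)
  with True assms(2) show ?thesis by (auto simp: card_gt_0_iff)
next
  case False
  then obtain M where "M \<ge> N" and r2: "2 \<le> r_num M G"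
    using g_num_geD[OF assms(3)] by auto
  have H: "subgroup (generate G {x}) G"
    using assms(4) by (intro group.generate_is_subgroup[OF assms(1)]) simp
  show ?thesis
  proof (rule ccontr)
    assume "\<not> ?thesis"
    then have "card (carrier G) \<le> N * card (generate G {x})"
      by simp
    also have "\<dots> \<le> M * card (generate G {x})"
      using \<open>M \<ge> N\<close> by (rule mult_le_mono1)
    finally have "r_num M G \<le> min_gens G (generate G {x})"
      by (rule r_num_le_min_gens[OF assms(2) H])
    also have "\<dots> \<le> 1"
      by (rule min_gens_generate_singleton)
    finally show False
      using r2 by simp
  qed
qed

lemma generate_integer_mod_group_one:
  "generate (integer_mod_group k) {1 mod int k} = carrier (integer_mod_group k)"
proof -
  interpret Z: group "integer_mod_group k" by simp
  have one: "1 mod int k \<in> carrier (integer_mod_group k)"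
    by (simp add: carrier_integer_mod_group)
  have "y \<in> generate (integer_mod_group k) {1 mod int k}"
    if y: "y \<in> carrier (integer_mod_group k)" for y
  proof -
    have "pow (integer_mod_group k) (1 mod int k) y = (y * (1 mod int k)) mod int k"
      by (rule int_pow_integer_mod_group)
    also have "\<dots> = y mod int k"
      by (simp add: mod_mult_right_eq)
    also have "\<dots> = y"
      using y by (cases "k = 0") (simp_all add: carrier_integer_mod_group)
    finally show ?thesis
      unfolding Z.generate_pow[OF one] mem_Collect_eq by (intro exI[of _ y]) simp
  qed
  moreover have "generate (integer_mod_group k) {1 mod int k} \<subseteq> carrier (integer_mod_group k)"
    using one by (intro Z.generate_incl) simp
  ultimately show ?thesis by blast
qed

text \<open>Also for k = 0, where the carrier is infinite and its card is 0.\<close>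
lemma card_carrier_integer_mod_group: "card (carrier (integer_mod_group k)) = k"
  by (simp add: carrier_integer_mod_group)

lemma card_carrier_epi:
  assumes "group G" and "group B" and "finite (carrier G)" and "h \<in> epi G B"
  shows "card (carrier G) = card (carrier B) * card (kernel G B h)"
proof -
  interpret h: group_hom G B h
    using assms unfolding epi_def by (simp add: group_hom_def group_hom_axioms_def)
  have "G Mod kernel G B h \<cong> B"
    using assms(4) by (intro h.FactGroup_iso) (simp add: epi_def)
  then have "card (rcosets\<^bsub>G\<^esub> kernel G B h) = card (carrier B)"
    unfolding FactGroup_def by (metis iso_same_card partial_object.select_convs(1))
  then show ?thesis
    using group.lagrange[OF assms(1) h.subgroup_kernel] by (simp add: order_def)
qed

lemma card_le_generate_preimage:
  assumes "group G" and "group B" and "finite (carrier G)" and "h \<in> hom G B"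
    and "x \<in> carrier G" and "generate B {h x} = carrier B"
  shows "card (carrier B) \<le> card (generate G {x})"
proof -
  interpret h: group_hom G B h
    using assms by (simp add: group_hom_def group_hom_axioms_def)
  have "carrier B = h ` generate G {x}"
    using h.generate_img[of "{x}"] assms(5,6) by simp
  moreover have "finite (generate G {x})"
    using assms(3,5) h.G.generate_incl[of "{x}"] by (simp add: finite_subset)
  ultimately show ?thesis by (simp add: card_image_le)
qed

lemma card_generate_mon_integer_mod_group:
  assumes "group G" and "f \<in> mon (integer_mod_group n) G"
  shows "card (generate G {f (1 mod int n)}) = n"
proof -
  interpret f: group_hom "integer_mod_group n" G f
    using assms by (simp add: group_hom_def group_hom_axioms_def mon_def)
  have "generate G {f (1 mod int n)} = f ` carrier (integer_mod_group n)"
    using f.generate_img[of "{1 mod int n}"]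
    by (simp add: generate_integer_mod_group_one carrier_integer_mod_group)
  moreover have "inj_on f (carrier (integer_mod_group n))"
    using assms(2) by (simp add: mon_def)
  ultimately show ?thesis
    by (simp add: card_image card_carrier_integer_mod_group)
qed

lemma card_carrier_extension:
  assumes "group G" and "finite (carrier G)"
    and "f \<in> mon (integer_mod_group n) G" and "h \<in> epi G (integer_mod_group m)"
    and "f ` carrier (integer_mod_group n) = kernel G (integer_mod_group m) h"
  shows "card (carrier G) = m * n"
proof -
  have "inj_on f (carrier (integer_mod_group n))"
    using assms(3) by (simp add: mon_def)
  then have "card (kernel G (integer_mod_group m) h) = n"
    by (simp add: assms(5)[symmetric] card_image card_carrier_integer_mod_group)
  then show ?thesis
    using card_carrier_epi[OF assms(1) _ assms(2,4)] by (simp add: card_carrier_integer_mod_group)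
qed

lemma epi_integer_mod_group_cyclic_lift:
  assumes "group G" and "finite (carrier G)" and "h \<in> epi G (integer_mod_group m)"
  obtains x where "x \<in> carrier G" and "m \<le> card (generate G {x})"
proof -
  have "1 mod int m \<in> h ` carrier G"
    using assms(3) by (simp add: epi_def carrier_integer_mod_group)
  then obtain x where x: "x \<in> carrier G" "h x = 1 mod int m"
    by (metis imageE)
  have hom: "h \<in> hom G (integer_mod_group m)"
    using assms(3) by (simp add: epi_def)
  have gen: "generate (integer_mod_group m) {h x} = carrier (integer_mod_group m)"
    unfolding x(2) by (rule generate_integer_mod_group_one)
  have "card (carrier (integer_mod_group m)) \<le> card (generate G {x})"
    by (rule card_le_generate_preimage[OF assms(1) group_integer_mod_group assms(2) hom x(1) gen])
  then have "m \<le> card (generate G {x})"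
    by (simp only: card_carrier_integer_mod_group)
  with x(1) show ?thesis by (rule that)
qed

theorem mainTheorem13:
  fixes G :: "('a, 'b) monoid_scheme" and N n m :: nat
  assumes "group G" and "finite (carrier G)"
    and "g_num 2 G \<ge> N"
    and "f \<in> mon (integer_mod_group n) G"
    and "h \<in> epi G (integer_mod_group m)"
    and "f ` carrier (integer_mod_group n) = kernel G (integer_mod_group m) h"
  shows "min m n \<ge> N"
proof -
  have card_G: "card (carrier G) = m * n"
    using card_carrier_extension[OF assms(1,2,4-6)] .
  have "f (1 mod int n) \<in> carrier G"
    using assms(4) by (simp add: mon_def hom_def carrier_integer_mod_group Pi_iff)
  from index_cyclic_subgroup_gt[OF assms(1-3) this] have "N * n < m * n"
    by (simp add: card_G card_generate_mon_integer_mod_group[OF assms(1,4)])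
  then have "N < m" by simp
  obtain x where x: "x \<in> carrier G" "m \<le> card (generate G {x})"
    using epi_integer_mod_group_cyclic_lift[OF assms(1,2,5)] .
  from x(2) have "N * m \<le> N * card (generate G {x})"
    by (rule mult_le_mono2)
  also have "\<dots> < card (carrier G)"
    by (rule index_cyclic_subgroup_gt[OF assms(1-3) x(1)])
  also have "\<dots> = n * m"
    using card_G by simp
  finally have "N < n" by simp
  with \<open>N < m\<close> show ?thesis by simp
qed

end
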